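(* Let $n\ge 2$, $1\le i\le n-1$, $0\le j\le n-1$, and let $G^*$ be a graph on $n$ vertices with at most one loop per vertex, with adjacency eigenvalues $\lambda_1\ge\cdots\ge\lambda_n$ and average degree $d$. If $\lambda_{i+1}-\lambda_{n-j}=\frac{n}{2}\sqrt{\frac{i+j+1}{i(j+1)}}$, then $\lambda_{i+1}\ge 0\ge\lambda_{n-j}$, $\lambda_1=d=\frac n2$, $\lambda_2=\cdots=\lambda_{i+1}=\frac n2\sqrt{\frac{j+1}{i(i+j+1)}}$, $\lambda_{n-j}=\cdots=\lambda_n=-\frac n2\sqrt{\frac{i}{(j+1)(i+j+1)}}$, and $\lambda_{i+2}=\cdots=\lambda_{n-j-1}=0$. *)

theory Defs
  imports "Jordan_Normal_Form.Char_Poly"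
begin

text \<open>A graph on vertex set {0..<n} with at most one loop per vertex (and no multiple
edges) is given by a symmetric adjacency relation E restricted to {0..<n}; E v v means
vertex v carries a loop.\<close>

definition loop_graph :: "nat \<Rightarrow> (nat \<Rightarrow> nat \<Rightarrow> bool) \<Rightarrow> bool" where
  "loop_graph n E \<longleftrightarrow> (\<forall>u v. E u v \<longrightarrow> u < n \<and> v < n) \<and> (\<forall>u v. E u v \<longrightarrow> E v u)"

definition adj_mat :: "nat \<Rightarrow> (nat \<Rightarrow> nat \<Rightarrow> bool) \<Rightarrow> real mat" where
  "adj_mat n E = mat n n (\<lambda>(u, v). if E u v then 1 else 0)"

text \<open>Average degree = (sum of all adjacency entries) / n (a loop contributes 1).\<close>
definition avg_degree :: "nat \<Rightarrow> (nat \<Rightarrow> nat \<Rightarrow> bool) \<Rightarrow> real" where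
  "avg_degree n E = (\<Sum>u<n. \<Sum>v<n. (adj_mat n E) $$ (u, v)) / real n"

text \<open>lam is the list of eigenvalues of A with multiplicity, in nonincreasing order
(lam ! 0 = lambda_1, ..., lam ! (n-1) = lambda_n).\<close>
definition sorted_eigenvalues :: "real mat \<Rightarrow> real list \<Rightarrow> bool" where
  "sorted_eigenvalues A lam \<longleftrightarrow> length lam = dim_row A \<and> sorted_wrt (\<ge>) lam \<and>
     char_poly A = (\<Prod>a\<leftarrow>lam. [:- a, 1:])"

end

theory Submission
  imports Defs "Jordan_Normal_Form.Schur_Decomposition"
    "Jordan_Normal_Form.Jordan_Normal_Form_Uniqueness" "HOL-Analysis.Convex"
begin

text \<open>The squares of the eigenvalues of the adjacency matrix A sum to tr(A^2), which for a
symmetric 0/1 matrix is its number of ones, n d; and lambda_1 \<ge> d because d is the Rayleigh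
quotient of the all-ones vector. Hence the squares of the remaining eigenvalues sum to at most
n d - d^2 \<le> n^2/4. If lambda_{i+1} \<ge> 0 \<ge> lambda_{n-j}, sortedness gives
i lambda_{i+1}^2 + (j+1) lambda_{n-j}^2 \<le> n^2/4, and the weighted Cauchy-Schwarz inequality
(x + y)^2 \<le> (1/i + 1/(j+1)) (i x^2 + (j+1) y^2) bounds the gap by exactly the assumed value;
the same budget excludes the other sign patterns. So equality holds throughout, and this pins
down every eigenvalue.

With no orthonormal eigenbasis at hand, lambda_1 \<ge> d is proved by comparing growth rates: for
M = A + c I with c so large that M has nonnegative spectrum, the entry sum of M^(2^r) is at
least n a^(2^r), a being the average row sum of M, while its square is at most
n^2 tr(M^(2^(r+1))) \<le> n^3 b^(2^(r+1)) with b the largest eigenvalue of M. Letting r grow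
gives a \<le> b.\<close>

lemma index_mult_mat_sum:
  fixes X Y :: "'a::semiring_0 mat"
  assumes "X \<in> carrier_mat n m" "Y \<in> carrier_mat m k" "u < n" "v < k"
  shows "(X * Y) $$ (u, v) = (\<Sum>w<m. X $$ (u, w) * Y $$ (w, v))"
  using assms by (auto simp: scalar_prod_def atLeast0LessThan intro!: sum.cong)

lemma sum_mat_carrier:
  assumes "A \<in> carrier_mat n m"
  shows "sum_mat A = (\<Sum>u<n. \<Sum>v<m. A $$ (u, v))"
  using assms by (simp add: sum_mat_def sum.cartesian_product atLeast0LessThan)

lemma pow_mat_add:
  fixes X :: "'a::semiring_1 mat"
  assumes "X \<in> carrier_mat n n"
  shows "X ^\<^sub>m (a + b) = X ^\<^sub>m a * X ^\<^sub>m b"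
proof (induction b)
  case (Suc b)
  have "X ^\<^sub>m (a + Suc b) = X ^\<^sub>m a * X ^\<^sub>m b * X"
    using Suc by simp
  also have "\<dots> = X ^\<^sub>m a * (X ^\<^sub>m b * X)"
    using assms by (intro assoc_mult_mat) auto
  finally show ?case by simp
qed (use assms in simp)

lemma transpose_pow_mat:
  fixes X :: "'a::comm_semiring_1 mat"
  assumes X: "X \<in> carrier_mat n n"
  shows "transpose_mat (X ^\<^sub>m k) = transpose_mat X ^\<^sub>m k"
proof (induction k)
  case (Suc k)
  have "transpose_mat (X ^\<^sub>m Suc k) = transpose_mat X * transpose_mat (X ^\<^sub>m k)"
    using X by (simp add: transpose_mult[of "X ^\<^sub>m k" n n X n])
  also have "\<dots> = transpose_mat X ^\<^sub>m 1 * transpose_mat X ^\<^sub>m k"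
    using X Suc by simp
  also have "\<dots> = transpose_mat X ^\<^sub>m Suc k"
    using pow_mat_add[of "transpose_mat X" n 1 k] X by simp
  finally show ?case .
qed (use X in simp)

lemma symmetric_mat_index:
  assumes "Y \<in> carrier_mat n n" "transpose_mat Y = Y" "u < n" "v < n"
  shows "Y $$ (v, u) = Y $$ (u, v)"
proof -
  have "transpose_mat Y $$ (u, v) = Y $$ (v, u)" using assms(1,3,4) by simp
  then show ?thesis unfolding assms(2) by (rule sym)
qed

section \<open>Traces and eigenvalues\<close>

definition trace_mat :: "'a::comm_monoid_add mat \<Rightarrow> 'a" where
  "trace_mat A = (\<Sum>i<dim_row A. A $$ (i, i))"

lemma trace_mat_mult_comm:
  fixes A B :: "'a::comm_semiring_0 mat"
  assumes A: "A \<in> carrier_mat n m" and B: "B \<in> carrier_mat m n"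
  shows "trace_mat (A * B) = trace_mat (B * A)"
proof -
  have "trace_mat (A * B) = (\<Sum>i<n. \<Sum>k<m. A $$ (i, k) * B $$ (k, i))"
    unfolding trace_mat_def using A B
    by (auto intro!: sum.cong simp: index_mult_mat_sum simp del: index_mult_mat(1))
  also have "\<dots> = (\<Sum>k<m. \<Sum>i<n. B $$ (k, i) * A $$ (i, k))"
    by (subst sum.swap) (simp add: mult.commute)
  also have "\<dots> = trace_mat (B * A)"
    unfolding trace_mat_def using A B
    by (auto intro!: sum.cong simp: index_mult_mat_sum simp del: index_mult_mat(1))
  finally show ?thesis .
qed

lemma trace_mat_similar:
  fixes P X Q :: "'a::comm_semiring_1 mat"
  assumes "P \<in> carrier_mat n n" "X \<in> carrier_mat n n" "Q \<in> carrier_mat n n"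
    and "Q * P = 1\<^sub>m n"
  shows "trace_mat (P * X * Q) = trace_mat X"
proof -
  have "trace_mat (P * X * Q) = trace_mat (Q * (P * X))"
    using assms by (intro trace_mat_mult_comm) auto
  also have "Q * (P * X) = (Q * P) * X"
    using assms by (intro assoc_mult_mat[symmetric]) auto
  finally show ?thesis using assms by simp
qed

lemma index_mult_upper_triangular:
  fixes X Y :: "'a::semiring_0 mat"
  assumes X: "X \<in> carrier_mat n n" and Y: "Y \<in> carrier_mat n n"
    and ut: "upper_triangular X" "upper_triangular Y" and ij: "j \<le> i" "i < n"
  shows "(X * Y) $$ (i, j) = (if i = j then X $$ (i, i) * Y $$ (i, i) else 0)"
proof -
  have "X $$ (i, w) * Y $$ (w, j) = (if w = i \<and> i = j then X $$ (i, i) * Y $$ (i, i) else 0)"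
    if "w < n" for w
  proof -
    consider "w < i" | "j < w" | "w = i" "i = j" using ij by linarith
    then show ?thesis
      using upper_triangularD[OF ut(1), of w i] upper_triangularD[OF ut(2), of j w] X Y that ij
      by cases auto
  qed
  then have "(X * Y) $$ (i, j) = (\<Sum>w<n. if w = i \<and> i = j then X $$ (i, i) * Y $$ (i, i) else 0)"
    using X Y ij by (auto simp: index_mult_mat_sum simp del: index_mult_mat(1) intro!: sum.cong)
  then show ?thesis using ij by simp
qed

lemma upper_triangular_pow_mat:
  fixes X :: "'a::semiring_1 mat"
  assumes X: "X \<in> carrier_mat n n" and ut: "upper_triangular X"
  shows "upper_triangular (X ^\<^sub>m k) \<and> (\<forall>i<n. (X ^\<^sub>m k) $$ (i, i) = X $$ (i, i) ^ k)"
proof (induction k)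
  case (Suc k)
  then have "upper_triangular (X ^\<^sub>m k)" by blast
  note entry = index_mult_upper_triangular[OF pow_carrier_mat[OF X] X this ut]
  show ?case
    using X Suc by (auto simp: entry power_commutes simp del: index_mult_mat(1) intro!: upper_triangularI)
qed (use X in auto)

lemma trace_pow_char_matrix:
  fixes A :: "'a::conjugatable_ordered_field mat"
  assumes A: "A \<in> carrier_mat n n" and cp: "char_poly A = (\<Prod>a\<leftarrow>lam. [:- a, 1:])"
  shows "trace_mat (char_matrix A e ^\<^sub>m p) = (\<Sum>i<n. (lam ! i - e) ^ p)"
proof -
  obtain B P Q where "schur_decomposition A lam = (B, P, Q)"
    by (cases "schur_decomposition A lam") auto
  from schur_decomposition[OF A cp this]
  have sim: "similar_mat_wit A B P Q" and ut: "upper_triangular B" and diag: "diag_mat B = lam"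
    by auto
  from similar_mat_witD2[OF A sim] have B: "B \<in> carrier_mat n n"
    and P: "P \<in> carrier_mat n n" and Q: "Q \<in> carrier_mat n n" and QP: "Q * P = 1\<^sub>m n"
    by auto
  define C where "C = char_matrix B e"
  have C: "C \<in> carrier_mat n n" using B by (simp add: C_def)
  have utC: "upper_triangular C"
    using ut B by (auto simp: C_def char_matrix_def intro!: upper_triangularI elim!: upper_triangularD)
  have Cii: "C $$ (i, i) = lam ! i - e" if "i < n" for i
    using that B diag by (auto simp: C_def char_matrix_def diag_mat_def)
  have "char_matrix A e ^\<^sub>m p = P * C ^\<^sub>m p * Q"
    unfolding C_def by (rule similar_mat_wit_pow_id[OF similar_mat_wit_char_matrix[OF sim]])
  then have "trace_mat (char_matrix A e ^\<^sub>m p) = trace_mat (C ^\<^sub>m p)"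
    using trace_mat_similar[OF P _ Q QP] C by simp
  also have "\<dots> = (\<Sum>i<n. (lam ! i - e) ^ p)"
    using upper_triangular_pow_mat[OF C utC] C Cii by (simp add: trace_mat_def)
  finally show ?thesis .
qed

lemma sum_squares_eigenvalues:
  fixes A :: "'a::conjugatable_ordered_field mat"
  assumes A: "A \<in> carrier_mat n n" and cp: "char_poly A = (\<Prod>a\<leftarrow>lam. [:- a, 1:])"
  shows "(\<Sum>k<n. (lam ! k)\<^sup>2) = trace_mat (A * A)"
proof -
  have "char_matrix A 0 = A"
    using A by (intro eq_matI) (auto simp: char_matrix_def)
  moreover have "A ^\<^sub>m 2 = A * A"
    using A by (simp add: numeral_2_eq_2)
  ultimately show ?thesis
    using trace_pow_char_matrix[OF A cp, of 0 2] by simp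
qed

lemma trace_mat_square_symmetric:
  fixes Y :: "'a::comm_semiring_1 mat"
  assumes Y: "Y \<in> carrier_mat n n" and sym: "transpose_mat Y = Y"
  shows "trace_mat (Y * Y) = (\<Sum>u<n. \<Sum>v<n. (Y $$ (u, v))\<^sup>2)"
  using Y symmetric_mat_index[OF Y sym] by (auto simp: trace_mat_def index_mult_mat_sum power2_eq_square
        simp del: index_mult_mat(1) intro!: sum.cong)

section \<open>Entry sums and the largest eigenvalue\<close>

lemma sum_mat_square_le_trace:
  fixes Y :: "real mat"
  assumes Y: "Y \<in> carrier_mat n n" and sym: "transpose_mat Y = Y"
  shows "(sum_mat Y)\<^sup>2 \<le> (real n)\<^sup>2 * trace_mat (Y * Y)"
proof -
  have "(sum_mat Y)\<^sup>2 \<le> (\<Sum>uv\<in>{0..<n} \<times> {0..<n}. (Y $$ uv)\<^sup>2) * real (card ({0..<n} \<times> {0..<n}))"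
    unfolding sum_mat_def using Y sum_squared_le_sum_of_squares[of "($$) Y" "{0..<n} \<times> {0..<n}"] by simp
  also have "\<dots> = (real n)\<^sup>2 * trace_mat (Y * Y)"
    by (simp add: trace_mat_square_symmetric[OF Y sym] sum.cartesian_product atLeast0LessThan
        power2_eq_square)
  finally show ?thesis .
qed

lemma sum_mat_square_le_sum_mat_mult:
  fixes Y :: "real mat"
  assumes Y: "Y \<in> carrier_mat n n" and sym: "transpose_mat Y = Y"
  shows "(sum_mat Y)\<^sup>2 \<le> real n * sum_mat (Y * Y)"
proof -
  define r where "r w = (\<Sum>v<n. Y $$ (w, v))" for w
  have column: "(\<Sum>u<n. Y $$ (u, w)) = r w" if "w < n" for w
    unfolding r_def using symmetric_mat_index[OF Y sym _ that] by (intro sum.cong) auto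
  have "sum_mat (Y * Y) = (\<Sum>u<n. \<Sum>v<n. \<Sum>w<n. Y $$ (u, w) * Y $$ (w, v))"
    using Y by (auto simp: sum_mat_carrier[of _ n n] index_mult_mat_sum
        simp del: index_mult_mat(1) intro!: sum.cong)
  also have "\<dots> = (\<Sum>u<n. \<Sum>w<n. \<Sum>v<n. Y $$ (u, w) * Y $$ (w, v))"
    by (rule sum.cong[OF refl], rule sum.swap)
  also have "\<dots> = (\<Sum>w<n. \<Sum>u<n. \<Sum>v<n. Y $$ (u, w) * Y $$ (w, v))"
    by (rule sum.swap)
  also have "\<dots> = (\<Sum>w<n. (\<Sum>u<n. Y $$ (u, w)) * r w)"
    by (simp add: r_def sum_product)
  also have "\<dots> = (\<Sum>w<n. (r w)\<^sup>2)"
    by (intro sum.cong refl) (simp add: column power2_eq_square)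
  finally have "sum_mat (Y * Y) = (\<Sum>w<n. (r w)\<^sup>2)" .
  moreover have "sum_mat Y = (\<Sum>w<n. r w)"
    using Y by (simp add: sum_mat_carrier r_def)
  ultimately show ?thesis
    using sum_squared_le_sum_of_squares[of r "{..<n}"] by (simp add: mult.commute)
qed

lemma sum_mat_pow_two_pow_ge:
  fixes M :: "real mat"
  assumes M: "M \<in> carrier_mat n n" and sym: "transpose_mat M = M" and n: "0 < n"
    and nonneg: "0 \<le> sum_mat M"
  shows "real n * (sum_mat M / real n) ^ 2 ^ r \<le> sum_mat (M ^\<^sub>m 2 ^ r)"
proof (induction r)
  case 0
  show ?case using M n by simp
next
  case (Suc r)
  let ?a = "sum_mat M / real n" and ?Y = "M ^\<^sub>m 2 ^ r"
  have Y: "?Y \<in> carrier_mat n n" using M by simp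
  have Ysym: "transpose_mat ?Y = ?Y" using transpose_pow_mat[OF M] sym by simp
  have "real n * (real n * ?a ^ 2 ^ Suc r) = (real n * ?a ^ 2 ^ r)\<^sup>2"
    by (simp add: power2_eq_square power_mult[symmetric] power_add[symmetric] mult_2)
  also have "\<dots> \<le> (sum_mat ?Y)\<^sup>2"
    using Suc nonneg n by (intro power_mono) auto
  also have "\<dots> \<le> real n * sum_mat (?Y * ?Y)"
    by (rule sum_mat_square_le_sum_mat_mult[OF Y Ysym])
  also have "\<dots> = real n * sum_mat (M ^\<^sub>m 2 ^ Suc r)"
    using pow_mat_add[OF M, of "2 ^ r" "2 ^ r"] by (simp add: mult_2)
  finally show ?case using n by simp
qed

lemma le_of_two_pow_powers_le:
  fixes a b N :: real
  assumes "0 \<le> a" "0 \<le> b" and le: "\<And>r. a ^ 2 ^ r \<le> N * b ^ 2 ^ r"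
  shows "a \<le> b"
proof (rule ccontr)
  assume "\<not> a \<le> b"
  then have "b < a" by simp
  show False
  proof (cases "b = 0")
    case True
    then show False using le[of 0] \<open>b < a\<close> by simp
  next
    case False
    with assms have b: "0 < b" by simp
    define q where "q = a / b"
    have q: "1 < q" using \<open>b < a\<close> b by (simp add: q_def)
    obtain r :: nat where r: "N < real r * (q - 1)"
      using ex_less_of_nat_mult[of "q - 1" N] q by auto
    have "real r * (q - 1) \<le> real (2 ^ r) * (q - 1)"
      using q by (intro mult_right_mono) auto
    also have "\<dots> \<le> q ^ 2 ^ r - 1"
      using Bernoulli_inequality[of "q - 1" "2 ^ r"] q by simp
    finally have "N < (a / b) ^ 2 ^ r"
      using r by (simp add: q_def)
    then have "N * b ^ 2 ^ r < a ^ 2 ^ r"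
      using b by (simp add: power_divide pos_less_divide_eq)
    then show False using le[of r] by simp
  qed
qed

lemma sum_mat_le_of_trace_pow_bound:
  fixes M :: "real mat"
  assumes M: "M \<in> carrier_mat n n" and sym: "transpose_mat M = M" and n: "0 < n"
    and nonneg: "0 \<le> sum_mat M" and b: "0 \<le> b"
    and trace: "\<And>r. trace_mat (M ^\<^sub>m 2 ^ Suc r) \<le> real n * b ^ 2 ^ Suc r"
  shows "sum_mat M \<le> real n * b"
proof -
  define a where "a = sum_mat M / real n"
  have a: "0 \<le> a" using nonneg by (simp add: a_def)
  have "(a\<^sup>2) ^ 2 ^ r \<le> real n * (b\<^sup>2) ^ 2 ^ r" for r
  proof -
    let ?Y = "M ^\<^sub>m 2 ^ r"
    have Y: "?Y \<in> carrier_mat n n" using M by simp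
    have Ysym: "transpose_mat ?Y = ?Y" using transpose_pow_mat[OF M] sym by simp
    have "(real n)\<^sup>2 * (a\<^sup>2) ^ 2 ^ r = (real n * a ^ 2 ^ r)\<^sup>2"
      by (simp add: power_mult_distrib mult.commute flip: power_mult)
    also have "\<dots> \<le> (sum_mat ?Y)\<^sup>2"
      using sum_mat_pow_two_pow_ge[OF M sym n nonneg, of r] a
      by (intro power_mono) (auto simp: a_def)
    also have "\<dots> \<le> (real n)\<^sup>2 * trace_mat (?Y * ?Y)"
      by (rule sum_mat_square_le_trace[OF Y Ysym])
    also have "\<dots> = (real n)\<^sup>2 * trace_mat (M ^\<^sub>m 2 ^ Suc r)"
      using pow_mat_add[OF M, of "2 ^ r" "2 ^ r"] by (simp add: mult_2)
    also have "\<dots> \<le> (real n)\<^sup>2 * (real n * b ^ 2 ^ Suc r)"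
      using trace[of r] by (rule mult_left_mono) simp
    also have "\<dots> = (real n)\<^sup>2 * (real n * (b\<^sup>2) ^ 2 ^ r)"
      by (simp add: mult.commute flip: power_mult)
    finally show ?thesis
      using n by simp
  qed
  then have "a\<^sup>2 \<le> b\<^sup>2"
    by (rule le_of_two_pow_powers_le[rotated 2]) simp_all
  then have "a \<le> b"
    using a b power2_le_iff_abs_le[OF b, of a] by simp
  then show ?thesis
    using n by (simp add: a_def pos_divide_le_eq mult.commute)
qed

lemma sum_mat_le_max_eigenvalue:
  fixes A :: "real mat"
  assumes A: "A \<in> carrier_mat n n" and sym: "transpose_mat A = A"
    and cp: "char_poly A = (\<Prod>a\<leftarrow>lam. [:- a, 1:])"
    and max: "\<And>k. k < n \<Longrightarrow> lam ! k \<le> lam ! 0"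
  shows "sum_mat A \<le> real n * lam ! 0"
proof (cases "n = 0")
  case True
  then show ?thesis using A by (simp add: sum_mat_carrier)
next
  case False
  then have n: "0 < n" by simp
  \<comment> \<open>The shift makes both the spectrum and the entry sum nonnegative.\<close>
  define c where "c = (\<Sum>k<n. \<bar>lam ! k\<bar>) + \<bar>sum_mat A\<bar>"
  define M where "M = char_matrix A (- c)"
  have range: "0 \<le> lam ! k + c" "lam ! k + c \<le> lam ! 0 + c" if "k < n" for k
  proof -
    have "\<bar>lam ! k\<bar> \<le> (\<Sum>k<n. \<bar>lam ! k\<bar>)" by (rule member_le_sum) (use that in auto)
    then show "0 \<le> lam ! k + c" "lam ! k + c \<le> lam ! 0 + c"
      using max[OF that] by (auto simp: c_def)
  qed
  have M: "M \<in> carrier_mat n n" using A by (simp add: M_def)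
  have M_index: "M $$ (u, v) = A $$ (u, v) + (if u = v then c else 0)" if "u < n" "v < n" for u v
    using that A by (simp add: M_def char_matrix_def)
  have Msym: "transpose_mat M = M"
    using A M symmetric_mat_index[OF A sym] by (intro eq_matI) (auto simp: M_index)
  have sum_M: "sum_mat M = sum_mat A + real n * c"
    using A M by (simp add: sum_mat_carrier M_index sum.distrib)
  have c: "\<bar>sum_mat A\<bar> \<le> c" "0 \<le> c"
    by (simp_all add: c_def sum_nonneg)
  have "1 * c \<le> real n * c"
    using n c(2) by (intro mult_right_mono) auto
  then have nonneg: "0 \<le> sum_mat M"
    using c abs_ge_minus_self[of "sum_mat A"] unfolding sum_M by linarith
  have "trace_mat (M ^\<^sub>m 2 ^ Suc r) \<le> real n * (lam ! 0 + c) ^ 2 ^ Suc r" for r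
  proof -
    have "trace_mat (M ^\<^sub>m 2 ^ Suc r) = (\<Sum>k<n. (lam ! k + c) ^ 2 ^ Suc r)"
      unfolding M_def trace_pow_char_matrix[OF A cp] by simp
    also have "\<dots> \<le> (\<Sum>k<n. (lam ! 0 + c) ^ 2 ^ Suc r)"
      using range by (intro sum_mono power_mono) auto
    finally show ?thesis by simp
  qed
  then have "sum_mat M \<le> real n * (lam ! 0 + c)"
    by (rule sum_mat_le_of_trace_pow_bound[OF M Msym n nonneg range(1)[OF n]])
  then show ?thesis
    by (simp add: sum_M algebra_simps)
qed

section \<open>The extremal inequality\<close>

lemma weighted_cauchy_schwarz_gap:
  fixes p q x z :: real
  assumes "p \<noteq> 0" "q \<noteq> 0"
  shows "(p + q) / (p * q) * (p * x\<^sup>2 + q * z\<^sup>2) - (x - z)\<^sup>2 = (p * x + q * z)\<^sup>2 / (p * q)"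
  using assms by (simp add: field_simps power2_eq_square)

lemma sqrt_share_of_gap:
  fixes p q :: real
  assumes "0 < p" "0 < q"
  shows "q / (p + q) * sqrt ((p + q) / (p * q)) = sqrt (q / (p * (p + q)))"
proof -
  have "(q / (p + q))\<^sup>2 * ((p + q) / (p * q)) = q * (q * (p + q)) / (p * (p + q) * (q * (p + q)))"
    by (simp add: power2_eq_square)
  also have "\<dots> = q / (p * (p + q))"
    using assms by (subst mult_divide_mult_cancel_right) auto
  finally have "sqrt (q / (p * (p + q))) = \<bar>q / (p + q)\<bar> * sqrt ((p + q) / (p * q))"
    by (metis real_sqrt_mult real_sqrt_abs)
  then show ?thesis
    using assms by simp
qed

lemma gap_signs_under_square_budget:
  fixes p q r x z S1 S3 :: real
  assumes p: "0 < p" and q: "0 < q" and r: "0 \<le> r"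
    and gap: "x - z = r * sqrt ((p + q) / (p * q))"
    and budget: "S1 + S3 \<le> r\<^sup>2" "0 \<le> S1" "0 \<le> S3"
    and top: "0 \<le> x \<Longrightarrow> p * x\<^sup>2 \<le> S1"
    and bottom: "z \<le> 0 \<Longrightarrow> q * z\<^sup>2 \<le> S3"
  shows "0 \<le> x" and "z \<le> 0"
proof -
  define K where "K = (p + q) / (p * q)"
  have gap0: "0 \<le> x - z" using gap r p q by simp
  have "1 \<le> p * K" "1 \<le> q * K"
    using p q by (simp_all add: K_def)
  then have "1 * r\<^sup>2 \<le> p * K * r\<^sup>2" "1 * r\<^sup>2 \<le> q * K * r\<^sup>2"
    by (simp_all only: mult_right_mono zero_le_power2)
  moreover have "(x - z)\<^sup>2 = K * r\<^sup>2"
    using gap p q by (simp add: K_def power_mult_distrib)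
  ultimately have p_gap: "r\<^sup>2 \<le> p * (x - z)\<^sup>2" and q_gap: "r\<^sup>2 \<le> q * (x - z)\<^sup>2"
    by (simp_all add: mult.assoc)
  show x: "0 \<le> x"
  proof (rule ccontr)
    assume "\<not> 0 \<le> x"
    then have z: "z \<le> 0" using gap0 by linarith
    have "(x - z)\<^sup>2 < (- z)\<^sup>2"
      by (rule power_strict_mono) (use gap0 \<open>\<not> 0 \<le> x\<close> in auto)
    then have "q * (x - z)\<^sup>2 < q * z\<^sup>2" using q by simp
    then show False using bottom[OF z] budget q_gap by linarith
  qed
  show "z \<le> 0"
  proof (rule ccontr)
    assume "\<not> z \<le> 0"
    have "(x - z)\<^sup>2 < x\<^sup>2"
      by (rule power_strict_mono) (use gap0 \<open>\<not> z \<le> 0\<close> in auto)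
    then have "p * (x - z)\<^sup>2 < p * x\<^sup>2" using p by simp
    then show False using top[OF x] budget p_gap by linarith
  qed
qed

lemma balanced_gap_values:
  fixes p q r x z :: real
  assumes p: "0 < p" and q: "0 < q" and gap: "x - z = r * sqrt ((p + q) / (p * q))"
    and balance: "p * x + q * z = 0"
  shows "x = r * sqrt (q / (p * (p + q)))" and "z = - r * sqrt (p / (q * (p + q)))"
proof -
  have pq: "p + q \<noteq> 0" using p q by simp
  have "x * (p + q) = q * (x - z)"
    using balance by (simp add: algebra_simps)
  then have "x = q * (x - z) / (p + q)"
    using pq by (simp add: eq_divide_eq)
  also have "\<dots> = r * (q / (p + q) * sqrt ((p + q) / (p * q)))"
    unfolding gap by (simp add: mult.left_commute)
  finally show "x = r * sqrt (q / (p * (p + q)))"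
    by (simp only: sqrt_share_of_gap[OF p q])
  have "- z * (p + q) = p * (x - z)"
    using balance by (simp add: algebra_simps)
  then have "- z = p * (x - z) / (p + q)"
    using pq by (simp add: eq_divide_eq)
  also have "\<dots> = r * (p / (p + q) * sqrt ((p + q) / (p * q)))"
    unfolding gap by (simp add: mult.left_commute)
  finally have "- z = r * sqrt (p / (q * (p + q)))"
    by (simp only: sqrt_share_of_gap[OF q p, unfolded add.commute[of q p] mult.commute[of q p]])
  then show "z = - r * sqrt (p / (q * (p + q)))"
    by simp
qed

lemma extremal_gap_under_square_budget:
  fixes p q r x z S1 S3 :: real
  assumes p: "0 < p" and q: "0 < q" and r: "0 \<le> r"
    and gap: "x - z = r * sqrt ((p + q) / (p * q))"
    and budget: "S1 + S3 \<le> r\<^sup>2" "0 \<le> S1" "0 \<le> S3"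
    and top: "0 \<le> x \<Longrightarrow> p * x\<^sup>2 \<le> S1"
    and bottom: "z \<le> 0 \<Longrightarrow> q * z\<^sup>2 \<le> S3"
  shows "0 \<le> x" "z \<le> 0" "S1 = p * x\<^sup>2" "S3 = q * z\<^sup>2" "S1 + S3 = r\<^sup>2"
    "x = r * sqrt (q / (p * (p + q)))" "z = - r * sqrt (p / (q * (p + q)))"
proof -
  note signs = gap_signs_under_square_budget[OF assms]
  then show x: "0 \<le> x" and z: "z \<le> 0" by simp_all
  define K where "K = (p + q) / (p * q)"
  have K: "0 < K" using p q by (simp add: K_def)
  have "K * (p * x\<^sup>2 + q * z\<^sup>2 - r\<^sup>2) = K * (p * x\<^sup>2 + q * z\<^sup>2) - (x - z)\<^sup>2"
    using gap p q by (simp add: K_def power_mult_distrib right_diff_distrib)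
  also have "\<dots> = (p * x + q * z)\<^sup>2 / (p * q)"
    unfolding K_def using p q by (intro weighted_cauchy_schwarz_gap) auto
  finally have cs: "K * (p * x\<^sup>2 + q * z\<^sup>2 - r\<^sup>2) = (p * x + q * z)\<^sup>2 / (p * q)" .
  have "K * (p * x\<^sup>2 + q * z\<^sup>2 - r\<^sup>2) \<le> 0"
    using K top[OF x] bottom[OF z] budget by (simp add: mult_le_0_iff)
  moreover have "0 \<le> (p * x + q * z)\<^sup>2 / (p * q)" using p q by simp
  ultimately have "K * (p * x\<^sup>2 + q * z\<^sup>2 - r\<^sup>2) = 0" "(p * x + q * z)\<^sup>2 / (p * q) = 0"
    using cs by linarith+
  then have "p * x\<^sup>2 + q * z\<^sup>2 = r\<^sup>2" and balance: "p * x + q * z = 0"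
    using K p q by simp_all
  then show "S1 = p * x\<^sup>2" "S3 = q * z\<^sup>2" "S1 + S3 = r\<^sup>2"
    using top[OF x] bottom[OF z] budget by simp_all
  show "x = r * sqrt (q / (p * (p + q)))" "z = - r * sqrt (p / (q * (p + q)))"
    by (rule balanced_gap_values[OF p q gap balance])+
qed

lemma card_mult_square_le_sum_squares:
  fixes f :: "'a \<Rightarrow> real"
  assumes "\<And>k. k \<in> S \<Longrightarrow> \<bar>c\<bar> \<le> \<bar>f k\<bar>"
  shows "real (card S) * c\<^sup>2 \<le> (\<Sum>k\<in>S. (f k)\<^sup>2)"
proof -
  have "(\<Sum>k\<in>S. c\<^sup>2) \<le> (\<Sum>k\<in>S. (f k)\<^sup>2)"
    by (rule sum_mono) (use assms in \<open>simp add: abs_le_square_iff\<close>)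
  then show ?thesis by simp
qed

lemma sum_squares_eq_card_mult_square_imp:
  fixes f :: "'a \<Rightarrow> real"
  assumes S: "finite S" and le: "\<And>k. k \<in> S \<Longrightarrow> \<bar>c\<bar> \<le> \<bar>f k\<bar>"
    and eq: "(\<Sum>k\<in>S. (f k)\<^sup>2) = real (card S) * c\<^sup>2" and k: "k \<in> S"
  shows "\<bar>f k\<bar> = \<bar>c\<bar>"
proof -
  have nonneg: "0 \<le> (f l)\<^sup>2 - c\<^sup>2" if "l \<in> S" for l
    using le[OF that] by (simp add: abs_le_square_iff)
  have "(\<Sum>l\<in>S. (f l)\<^sup>2 - c\<^sup>2) = 0"
    using eq by (simp add: sum_subtractf)
  then have "(f k)\<^sup>2 = c\<^sup>2"
    using sum_nonneg_eq_0_iff[OF S, of "\<lambda>l. (f l)\<^sup>2 - c\<^sup>2"] nonneg k by simp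
  then show ?thesis
    by (metis real_sqrt_abs)
qed

lemma sorted_wrt_ge_nth_mono:
  fixes xs :: "'a::preorder list"
  assumes "sorted_wrt (\<ge>) xs" "k \<le> l" "l < length xs"
  shows "xs ! l \<le> xs ! k"
  using sorted_wrt_nth_less[OF assms(1), of k l] assms(2,3) by (cases "k = l") auto

lemma sum_lessThan_split_blocks:
  fixes f :: "nat \<Rightarrow> 'a::comm_monoid_add"
  assumes "i < m" "m \<le> n"
  shows "(\<Sum>k<n. f k) = f 0 + sum f {1..i} + sum f {Suc i..<m} + sum f {m..<n}"
proof -
  have "(\<Sum>k<n. f k) = sum f {0..<1} + sum f {1..<n}"
    unfolding lessThan_atLeast0 by (rule sum.atLeastLessThan_concat[symmetric]) (use assms in auto)
  also have "sum f {1..<n} = sum f {1..<Suc i} + sum f {Suc i..<n}"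
    by (rule sum.atLeastLessThan_concat[symmetric]) (use assms in auto)
  also have "sum f {Suc i..<n} = sum f {Suc i..<m} + sum f {m..<n}"
    by (rule sum.atLeastLessThan_concat[symmetric]) (use assms in auto)
  finally show ?thesis
    by (simp add: atLeastLessThanSuc_atLeastAtMost add.assoc)
qed

lemma sum_squares_top_block:
  fixes lam :: "real list"
  assumes sorted: "sorted_wrt (\<ge>) lam" and b: "b < length lam" and nonneg: "0 \<le> lam ! b"
  shows "real (card {a..b}) * (lam ! b)\<^sup>2 \<le> (\<Sum>k\<in>{a..b}. (lam ! k)\<^sup>2)"
    and "(\<Sum>k\<in>{a..b}. (lam ! k)\<^sup>2) = real (card {a..b}) * (lam ! b)\<^sup>2
      \<Longrightarrow> \<forall>k\<in>{a..b}. lam ! k = lam ! b"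
proof -
  have le: "\<bar>lam ! b\<bar> \<le> \<bar>lam ! k\<bar>" "lam ! b \<le> lam ! k" if "k \<in> {a..b}" for k
    using sorted_wrt_ge_nth_mono[OF sorted, of k b] that b nonneg by auto
  show "real (card {a..b}) * (lam ! b)\<^sup>2 \<le> (\<Sum>k\<in>{a..b}. (lam ! k)\<^sup>2)"
    using card_mult_square_le_sum_squares[of "{a..b}" "lam ! b" "\<lambda>k. lam ! k"] le(1) by blast
  show "\<forall>k\<in>{a..b}. lam ! k = lam ! b"
    if "(\<Sum>k\<in>{a..b}. (lam ! k)\<^sup>2) = real (card {a..b}) * (lam ! b)\<^sup>2"
  proof
    fix k assume k: "k \<in> {a..b}"
    have "\<bar>lam ! k\<bar> = \<bar>lam ! b\<bar>"
      using sum_squares_eq_card_mult_square_imp[of "{a..b}" "lam ! b" "\<lambda>k. lam ! k" k] le(1) that k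
      by blast
    then show "lam ! k = lam ! b" using le(2)[OF k] nonneg by auto
  qed
qed

lemma sum_squares_bottom_block:
  fixes lam :: "real list"
  assumes sorted: "sorted_wrt (\<ge>) lam" and nonpos: "lam ! a \<le> 0"
  shows "real (card {a..<length lam}) * (lam ! a)\<^sup>2 \<le> (\<Sum>k\<in>{a..<length lam}. (lam ! k)\<^sup>2)"
    and "(\<Sum>k\<in>{a..<length lam}. (lam ! k)\<^sup>2) = real (card {a..<length lam}) * (lam ! a)\<^sup>2
      \<Longrightarrow> \<forall>k\<in>{a..<length lam}. lam ! k = lam ! a"
proof -
  have le: "\<bar>lam ! a\<bar> \<le> \<bar>lam ! k\<bar>" "lam ! k \<le> lam ! a" if "k \<in> {a..<length lam}" for k
    using sorted_wrt_ge_nth_mono[OF sorted, of a k] that nonpos by auto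
  show "real (card {a..<length lam}) * (lam ! a)\<^sup>2 \<le> (\<Sum>k\<in>{a..<length lam}. (lam ! k)\<^sup>2)"
    using card_mult_square_le_sum_squares[of "{a..<length lam}" "lam ! a" "\<lambda>k. lam ! k"] le(1)
    by blast
  show "\<forall>k\<in>{a..<length lam}. lam ! k = lam ! a"
    if "(\<Sum>k\<in>{a..<length lam}. (lam ! k)\<^sup>2) = real (card {a..<length lam}) * (lam ! a)\<^sup>2"
  proof
    fix k assume k: "k \<in> {a..<length lam}"
    have "\<bar>lam ! k\<bar> = \<bar>lam ! a\<bar>"
      using sum_squares_eq_card_mult_square_imp[of "{a..<length lam}" "lam ! a" "\<lambda>k. lam ! k" k]
        le(1) that k by blast
    then show "lam ! k = lam ! a" using le(2)[OF k] nonpos by auto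
  qed
qed

lemma extremal_gap_sorted_list:
  fixes lam :: "real list" and n i j :: nat and d :: real
  assumes len: "length lam = n" and sorted: "sorted_wrt (\<ge>) lam"
    and i: "1 \<le> i" "i \<le> n - 1"
    and d: "0 \<le> d" "d \<le> lam ! 0" and squares: "(\<Sum>k<n. (lam ! k)\<^sup>2) = real n * d"
    and gap: "lam ! i - lam ! (n - j - 1)
      = real n / 2 * sqrt ((real i + real j + 1) / (real i * (real j + 1)))"
  shows "lam ! i \<ge> 0 \<and> 0 \<ge> lam ! (n - j - 1) \<and> lam ! 0 = d \<and> d = real n / 2
    \<and> (\<forall>k. 1 \<le> k \<and> k \<le> i \<longrightarrow>
          lam ! k = real n / 2 * sqrt ((real j + 1) / (real i * (real i + real j + 1))))
    \<and> (\<forall>k. n - j - 1 \<le> k \<and> k \<le> n - 1 \<longrightarrow>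
          lam ! k = - (real n / 2) * sqrt (real i / ((real j + 1) * (real i + real j + 1))))
    \<and> (\<forall>k. i + 1 \<le> k \<and> k < n - j - 1 \<longrightarrow> lam ! k = 0)"
proof -
  define m where "m = n - j - 1"
  define x z where "x = lam ! i" and "z = lam ! m"
  define S1 S2 S3 where "S1 = (\<Sum>k\<in>{1..i}. (lam ! k)\<^sup>2)"
    and "S2 = (\<Sum>k\<in>{Suc i..<m}. (lam ! k)\<^sup>2)" and "S3 = (\<Sum>k\<in>{m..<n}. (lam ! k)\<^sup>2)"
  have "0 < real n / 2 * sqrt ((real i + real j + 1) / (real i * (real j + 1)))"
    using i by (intro mult_pos_pos divide_pos_pos real_sqrt_gt_zero) auto
  then have "lam ! m < lam ! i" using gap by (simp add: m_def)
  moreover have "i < n" using i by linarith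
  ultimately have im: "i < m" and mn: "m < n" and card: "card {1..i} = i" "card {m..<n} = j + 1"
    using sorted_wrt_ge_nth_mono[OF sorted, of m i] len by (force simp: m_def)+
  have slack: "S1 + S3 + S2 + ((lam ! 0)\<^sup>2 - d\<^sup>2) + (real n / 2 - d)\<^sup>2 = (real n / 2)\<^sup>2"
    using sum_lessThan_split_blocks[of i m n "\<lambda>k. (lam ! k)\<^sup>2"] im mn squares
    by (simp add: S1_def S2_def S3_def power2_eq_square field_simps)
  have lam0: "d\<^sup>2 \<le> (lam ! 0)\<^sup>2" using d by (simp add: power_mono)
  have nonneg: "0 \<le> S1" "0 \<le> S2" "0 \<le> S3" by (simp_all add: S1_def S2_def S3_def sum_nonneg)
  have budget: "S1 + S3 \<le> (real n / 2)\<^sup>2"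
    using slack lam0 nonneg zero_le_power2[of "real n / 2 - d"] by linarith
  have top: "real i * x\<^sup>2 \<le> S1" if "0 \<le> x"
    using sum_squares_top_block(1)[OF sorted, of i 1] that im mn len card by (simp add: S1_def x_def)
  have bottom: "(real j + 1) * z\<^sup>2 \<le> S3" if "z \<le> 0"
    using sum_squares_bottom_block(1)[OF sorted, of m] that len card by (simp add: S3_def z_def add.commute)
  have gap': "x - z = real n / 2 * sqrt ((real i + (real j + 1)) / (real i * (real j + 1)))"
    using gap by (simp add: x_def z_def m_def add.assoc)
  have pos: "0 < real i" "0 < real j + 1" "0 \<le> real n / 2" using i by auto
  from extremal_gap_under_square_budget[OF pos gap' budget nonneg(1,3) top bottom]
  have x: "0 \<le> x" and z: "z \<le> 0" and S1: "S1 = real i * x\<^sup>2"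
    and S3: "S3 = (real j + 1) * z\<^sup>2" and S13: "S1 + S3 = (real n / 2)\<^sup>2"
    and x_val: "x = real n / 2 * sqrt ((real j + 1) / (real i * (real i + real j + 1)))"
    and z_val: "z = - (real n / 2) * sqrt (real i / ((real j + 1) * (real i + real j + 1)))"
    by (simp_all add: add.assoc)
  have "S2 = 0" "(lam ! 0)\<^sup>2 = d\<^sup>2" "(real n / 2 - d)\<^sup>2 = 0"
    using slack S13 lam0 nonneg zero_le_power2[of "real n / 2 - d"] by linarith+
  then have "S2 = 0" "lam ! 0 = d" "d = real n / 2"
    using d by (simp_all add: power2_eq_iff_nonneg)
  have top_vals: "\<forall>k\<in>{1..i}. lam ! k = x"
    using x S1 card im mn len
    by (intro sum_squares_top_block(2)[OF sorted, of i 1, folded x_def]) (simp_all add: S1_def)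
  have bottom_vals: "\<forall>k\<in>{m..<n}. lam ! k = z"
    using z S3 card len
    by (intro sum_squares_bottom_block(2)[OF sorted, of m, unfolded len, folded z_def]) (simp_all add: S3_def)
  have middle_vals: "\<forall>k. i + 1 \<le> k \<and> k < m \<longrightarrow> lam ! k = 0"
    using \<open>S2 = 0\<close> sum_nonneg_eq_0_iff[of "{Suc i..<m}" "\<lambda>k. (lam ! k)\<^sup>2"] by (simp add: S2_def)
  show ?thesis
    unfolding m_def[symmetric] x_def[symmetric] z_def[symmetric] x_val[symmetric] z_val[symmetric]
    using x z \<open>lam ! 0 = d\<close> \<open>d = real n / 2\<close> top_vals bottom_vals middle_vals mn
    by auto
qed

section \<open>Adjacency matrices\<close>

lemma adj_mat_carrier: "adj_mat n E \<in> carrier_mat n n"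
  by (simp add: adj_mat_def)

lemma index_adj_mat: "u < n \<Longrightarrow> v < n \<Longrightarrow> adj_mat n E $$ (u, v) = (if E u v then 1 else 0)"
  by (simp add: adj_mat_def)

lemma transpose_adj_mat:
  assumes "loop_graph n E"
  shows "transpose_mat (adj_mat n E) = adj_mat n E"
  using assms by (intro eq_matI) (auto simp: adj_mat_def loop_graph_def)

lemma trace_square_adj_mat:
  assumes "loop_graph n E"
  shows "trace_mat (adj_mat n E * adj_mat n E) = sum_mat (adj_mat n E)"
  using trace_mat_square_symmetric[OF adj_mat_carrier transpose_adj_mat[OF assms]]
  by (auto simp: sum_mat_carrier[OF adj_mat_carrier] index_adj_mat intro!: sum.cong)

lemma avg_degree_eq_sum_mat: "avg_degree n E = sum_mat (adj_mat n E) / real n"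
  by (simp add: avg_degree_def sum_mat_carrier[OF adj_mat_carrier])

theorem mainTheorem2:
  fixes n i j :: nat and E :: "nat \<Rightarrow> nat \<Rightarrow> bool" and lam :: "real list"
  assumes "n \<ge> 2" and "1 \<le> i" and "i \<le> n - 1" and "j \<le> n - 1"
    and "loop_graph n E"
    and "sorted_eigenvalues (adj_mat n E) lam"
    and "lam ! i - lam ! (n - j - 1) = real n / 2 * sqrt ((real i + real j + 1) / (real i * (real j + 1)))"
  shows "lam ! i \<ge> 0 \<and> 0 \<ge> lam ! (n - j - 1)
    \<and> lam ! 0 = avg_degree n E \<and> avg_degree n E = real n / 2
    \<and> (\<forall>k. 1 \<le> k \<and> k \<le> i \<longrightarrow>
          lam ! k = real n / 2 * sqrt ((real j + 1) / (real i * (real i + real j + 1))))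
    \<and> (\<forall>k. n - j - 1 \<le> k \<and> k \<le> n - 1 \<longrightarrow>
          lam ! k = - (real n / 2) * sqrt (real i / ((real j + 1) * (real i + real j + 1))))
    \<and> (\<forall>k. i + 1 \<le> k \<and> k < n - j - 1 \<longrightarrow> lam ! k = 0)"
proof -
  let ?A = "adj_mat n E"
  have A: "?A \<in> carrier_mat n n" by (rule adj_mat_carrier)
  from assms(6) have len: "length lam = n" and sorted: "sorted_wrt (\<ge>) lam"
    and cp: "char_poly ?A = (\<Prod>a\<leftarrow>lam. [:- a, 1:])"
    unfolding sorted_eigenvalues_def using A by auto
  have largest: "lam ! k \<le> lam ! 0" if "k < n" for k
    using sorted_wrt_ge_nth_mono[OF sorted, of 0 k] that len by simp
  have "sum_mat ?A \<le> real n * lam ! 0"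
    by (rule sum_mat_le_max_eigenvalue[OF A transpose_adj_mat[OF assms(5)] cp largest])
  then have "avg_degree n E \<le> lam ! 0"
    using assms(1) by (simp add: avg_degree_eq_sum_mat divide_le_eq mult.commute)
  moreover have "0 \<le> avg_degree n E"
    by (simp add: avg_degree_def adj_mat_def sum_nonneg)
  moreover have "(\<Sum>k<n. (lam ! k)\<^sup>2) = real n * avg_degree n E"
    using sum_squares_eigenvalues[OF A cp] trace_square_adj_mat[OF assms(5)] assms(1)
    by (simp add: avg_degree_eq_sum_mat)
  ultimately show ?thesis
    using extremal_gap_sorted_list[OF len sorted assms(2,3) _ _ _ assms(7)] by blast
qed

end
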